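(* (i) The Hamming distance $d$ is an integer-valued metric on $\mathscr P$. (ii) For all $\lambda,\mu\in\mathscr P$, $d(\lambda,\mu)=\frac12|S_\lambda\,\Delta\,S_\mu|$. (iii) If $|\lambda|=|\mu|$, then $d(\lambda,\mu)\ne1$. (iv) For every integer $k\ge0$, if $d(\lambda,\mu)=2k$, then $|S_\lambda\setminus S_\mu|=2k=|S_\mu\setminus S_\lambda|$.
   Context: $\mathscr P$ is the set of all integer partitions, $|\lambda|$ the size, $\lambda'$ the transpose. Modified Frobenius coordinates: if $d$ is the number of $i\ge1$ with $\lambda_i\ge i$, put $c_i=\lambda_i-i+\frac12$ and $c_i^*=-(\lambda'_i-i)-\frac12$ for $i=1,\dots,d$, and $C_\lambda=\{c_1,\dots,c_d,c_1^*,\dots,c_d^*\}\subset\mathbb Z+\frac12$. The Hamming distance is $d(\lambda,\mu)=\frac12|C_\lambda\,\Delta\,C_\mu|$, where $X\,\Delta\,Y=(X\cup Y)\setminus(X\cap Y)$. Also $S_\lambda=\{\lambda_j-j+\frac12: j\ge1\}$ (with $\lambda_j=0$ for $j$ larger than the length). *)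

theory Defs
  imports Complex_Main
begin

definition is_partition :: "nat list \<Rightarrow> bool" where
  "is_partition xs \<longleftrightarrow> sorted_wrt (\<ge>) xs \<and> 0 \<notin> set xs"

text \<open>The i-th part (1-based), zero beyond the length.\<close>
definition part :: "nat list \<Rightarrow> nat \<Rightarrow> nat" where
  "part xs i = (if 1 \<le> i \<and> i \<le> length xs then xs ! (i - 1) else 0)"

definition psize :: "nat list \<Rightarrow> nat" where
  "psize xs = sum_list xs"

definition tpart :: "nat list \<Rightarrow> nat \<Rightarrow> nat" where
  "tpart xs i = card {j. 1 \<le> j \<and> i \<le> part xs j}"

definition durfee :: "nat list \<Rightarrow> nat" where
  "durfee xs = card {i. 1 \<le> i \<and> i \<le> part xs i}"

text \<open>Modified Frobenius coordinates, as a subset of Z + 1/2 inside the reals.\<close>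
definition frob :: "nat list \<Rightarrow> real set" where
  "frob xs = {real (part xs i) - real i + 1/2 | i. 1 \<le> i \<and> i \<le> durfee xs}
           \<union> {- (real (tpart xs i) - real i) - 1/2 | i. 1 \<le> i \<and> i \<le> durfee xs}"

definition symdiff :: "'a set \<Rightarrow> 'a set \<Rightarrow> 'a set" where
  "symdiff X Y = (X \<union> Y) - (X \<inter> Y)"

definition hamming :: "nat list \<Rightarrow> nat list \<Rightarrow> real" where
  "hamming xs ys = real (card (symdiff (frob xs) (frob ys))) / 2"

definition Sset :: "nat list \<Rightarrow> real set" where
  "Sset xs = {real (part xs j) - real j + 1/2 | j. 1 \<le> j}"

end

theory Submission
  imports Defs
begin

text \<open>The integers \<lambda>_j - j (j \<ge> 1) form the Maya diagram of \<lambda>, and S_\<lambda> is its shift by 1/2.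
  The first Frobenius coordinates are exactly its nonnegative elements and the second ones
  exactly the negative integers missing from it, so C_\<lambda> \<Delta> C_\<mu> = S_\<lambda> \<Delta> S_\<mu>.
  If \<lambda> has at most N parts, the Maya diagram contains every integer below -N and exactly
  N integers at or above -N, with sum |\<lambda>| - N(N+1)/2. Hence S_\<lambda> - S_\<mu> and S_\<mu> - S_\<lambda>
  have the same size, and if they were singletons {a} and {b} for |\<lambda>| = |\<mu>|,
  comparing the two sums would give a = b.\<close>

lemma symdiff_image: "inj f \<Longrightarrow> symdiff (f ` X) (f ` Y) = f ` symdiff X Y"
  unfolding symdiff_def by (simp add: image_Un image_Int image_set_diff)

lemma symdiff_eq_Diff_Un_Diff: "symdiff X Y = (X - Y) \<union> (Y - X)"
  unfolding symdiff_def by blast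

lemma card_symdiff:
  "finite (X - Y) \<Longrightarrow> finite (Y - X) \<Longrightarrow> card (symdiff X Y) = card (X - Y) + card (Y - X)"
  unfolding symdiff_eq_Diff_Un_Diff by (rule card_Un_disjoint) auto

lemma card_symdiff_triangle:
  assumes "finite X" "finite Y" "finite Z"
  shows "card (symdiff X Z) \<le> card (symdiff X Y) + card (symdiff Y Z)"
proof -
  have "card (symdiff X Z) \<le> card (symdiff X Y \<union> symdiff Y Z)"
    by (rule card_mono) (auto simp: symdiff_def assms)
  also have "\<dots> \<le> card (symdiff X Y) + card (symdiff Y Z)"
    by (rule card_Un_le)
  finally show ?thesis .
qed

lemma sum_neq_if_Diff_singletons:
  fixes A B :: "'a::cancel_comm_monoid_add set"
  assumes "finite A" "A - B = {a}" "B - A = {b}"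
  shows "\<Sum>A \<noteq> \<Sum>B"
proof
  assume sums: "\<Sum>A = \<Sum>B"
  have A: "A = insert a (A \<inter> B)" "a \<notin> A \<inter> B" and B: "B = insert b (A \<inter> B)" "b \<notin> A \<inter> B"
    using assms(2,3) by blast+
  have "\<Sum>A = a + \<Sum>(A \<inter> B)"
    using assms(1) A by (metis finite_Int sum.insert)
  moreover have "\<Sum>B = b + \<Sum>(A \<inter> B)"
    using assms(1) B by (metis finite_Int sum.insert)
  ultimately have "a + \<Sum>(A \<inter> B) = b + \<Sum>(A \<inter> B)"
    using sums by simp
  then have "a = b" by simp
  then show False using assms(2,3) by blast
qed

lemma initial_segment_eq_atLeastAtMost:
  fixes P :: "nat \<Rightarrow> bool"
  assumes "finite {j. 1 \<le> j \<and> P j}" and "\<And>i j. 1 \<le> i \<Longrightarrow> i \<le> j \<Longrightarrow> P j \<Longrightarrow> P i"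
  shows "{j. 1 \<le> j \<and> P j} = {1..card {j. 1 \<le> j \<and> P j}}"
proof (cases "{j. 1 \<le> j \<and> P j} = {}")
  case False
  define m where "m = Max {j. 1 \<le> j \<and> P j}"
  have "m \<in> {j. 1 \<le> j \<and> P j}" unfolding m_def using assms(1) False by (rule Max_in)
  then have "{j. 1 \<le> j \<and> P j} = {1..m}"
    using assms Max_ge[OF assms(1)] unfolding m_def by auto
  then show ?thesis by simp
next
  case True
  then show ?thesis unfolding True by simp
qed

lemma part_eq_0: "length xs < j \<Longrightarrow> part xs j = 0"
  by (simp add: part_def)

lemma part_pos: "is_partition xs \<Longrightarrow> 1 \<le> j \<Longrightarrow> j \<le> length xs \<Longrightarrow> 0 < part xs j"
  unfolding is_partition_def part_def using in_set_conv_nth by fastforce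

lemma part_antimono:
  assumes "is_partition xs" "1 \<le> i" "i \<le> j"
  shows "part xs j \<le> part xs i"
proof (cases "i < j \<and> j \<le> length xs")
  case True
  then have "i - 1 < j - 1" "j - 1 < length xs" using assms(2) by auto
  then have "xs ! (j - 1) \<le> xs ! (i - 1)"
    using assms(1) unfolding is_partition_def sorted_wrt_iff_nth_less by blast
  then show ?thesis using True assms unfolding part_def by simp
qed (use assms in \<open>auto simp: part_def\<close>)

lemma partition_eqI:
  assumes "is_partition xs" "is_partition ys" "\<And>j. 1 \<le> j \<Longrightarrow> part xs j = part ys j"
  shows "xs = ys"
proof -
  have "\<not> length xs < length ys" "\<not> length ys < length xs"
    using assms(3)[of "length ys"] assms(3)[of "length xs"] part_eq_0[of xs "length ys"]
      part_eq_0[of ys "length xs"] part_pos[OF assms(1), of "length xs"]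
      part_pos[OF assms(2), of "length ys"]
    by auto
  then have "length xs = length ys" by simp
  then show ?thesis
  proof (rule nth_equalityI)
    fix i assume "i < length xs"
    then show "xs ! i = ys ! i"
      using assms(3)[of "Suc i"] \<open>length xs = length ys\<close> by (simp add: part_def)
  qed
qed

lemma le_length_if_part_pos: "0 < part xs j \<Longrightarrow> j \<le> length xs"
  using part_eq_0 by (metis not_le less_irrefl)

lemma le_tpart_iff:
  assumes "is_partition xs" "1 \<le> i" "1 \<le> j"
  shows "j \<le> tpart xs i \<longleftrightarrow> i \<le> part xs j"
proof -
  have "{j. 1 \<le> j \<and> i \<le> part xs j} \<subseteq> {1..length xs}"
    using assms(2) le_length_if_part_pos by fastforce
  then have "{j. 1 \<le> j \<and> i \<le> part xs j} = {1..tpart xs i}"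
    unfolding tpart_def
    by (rule initial_segment_eq_atLeastAtMost[OF finite_subset[OF _ finite_atLeastAtMost]])
      (meson assms(1) part_antimono order_trans)
  then show ?thesis using assms(3) by (auto simp: set_eq_iff)
qed

lemma le_durfee_iff:
  assumes "is_partition xs" "1 \<le> i"
  shows "i \<le> durfee xs \<longleftrightarrow> i \<le> part xs i"
proof -
  have "{i. 1 \<le> i \<and> i \<le> part xs i} \<subseteq> {1..length xs}"
    using le_length_if_part_pos by fastforce
  then have "{i. 1 \<le> i \<and> i \<le> part xs i} = {1..durfee xs}"
    unfolding durfee_def
    by (rule initial_segment_eq_atLeastAtMost[OF finite_subset[OF _ finite_atLeastAtMost]])
      (meson assms(1) part_antimono order_trans)
  then show ?thesis using assms(2) by (auto simp: set_eq_iff)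
qed

lemma sum_part_eq_psize:
  assumes "length xs \<le> N"
  shows "(\<Sum>j=1..N. part xs j) = psize xs"
proof -
  have "(\<Sum>j=1..N. part xs j) = (\<Sum>i<N. part xs (Suc i))"
    by (simp add: sum.atLeast1_atMost_eq)
  also have "\<dots> = (\<Sum>i<length xs. xs ! i)"
    using assms by (intro sum.mono_neutral_cong_right) (auto simp: part_def)
  also have "\<dots> = psize xs"
    by (simp add: psize_def sum_list_sum_nth atLeast0LessThan)
  finally show ?thesis .
qed

definition shifted_part :: "nat list \<Rightarrow> nat \<Rightarrow> int" where
  "shifted_part xs j = int (part xs j) - int j"

definition maya :: "nat list \<Rightarrow> int set" where
  "maya xs = shifted_part xs ` {1..}"

definition half_int :: "int \<Rightarrow> real" where
  "half_int z = of_int z + 1/2"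

lemma inj_half_int: "inj half_int"
  by (auto simp: inj_def half_int_def)

lemma Sset_eq_image_maya: "Sset xs = half_int ` maya xs"
  unfolding Sset_def maya_def half_int_def shifted_part_def by (auto simp: image_iff)

lemma shifted_part_strict_antimono:
  "is_partition xs \<Longrightarrow> 1 \<le> i \<Longrightarrow> i < j \<Longrightarrow> shifted_part xs j < shifted_part xs i"
  unfolding shifted_part_def using part_antimono[of xs i j] by simp

lemma shifted_part_antimono:
  "is_partition xs \<Longrightarrow> 1 \<le> i \<Longrightarrow> i \<le> j \<Longrightarrow> shifted_part xs j \<le> shifted_part xs i"
  using shifted_part_strict_antimono[of xs i j] by (cases "i = j") auto

lemma inj_on_shifted_part: "is_partition xs \<Longrightarrow> inj_on (shifted_part xs) {1..}"
  by (intro inj_onI) (metis atLeast_iff linorder_neqE_nat less_irrefl shifted_part_strict_antimono)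

lemma shifted_part_beyond_length: "length xs < j \<Longrightarrow> shifted_part xs j = - int j"
  by (simp add: shifted_part_def part_eq_0)

lemma shifted_part_1_ge: "- 1 \<le> shifted_part xs 1"
  by (simp add: shifted_part_def)

lemma card_maya_greater:
  assumes "is_partition xs" "1 \<le> j"
  shows "card {y \<in> maya xs. shifted_part xs j < y} = j - 1"
proof -
  have "shifted_part xs j < shifted_part xs i \<longleftrightarrow> i < j" if "1 \<le> i" for i
    using shifted_part_strict_antimono[OF assms(1)] that assms(2)
    by (metis less_asym linorder_neqE_nat)
  then have "{y \<in> maya xs. shifted_part xs j < y} = shifted_part xs ` {1..<j}"
    unfolding maya_def by auto
  moreover have "inj_on (shifted_part xs) {1..<j}"
    using inj_on_shifted_part[OF assms(1)] by (rule inj_on_subset) auto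
  ultimately show ?thesis by (simp add: card_image)
qed

lemma maya_inject:
  assumes "is_partition l" "is_partition m" "maya l = maya m"
  shows "l = m"
proof (rule partition_eqI[OF assms(1,2)])
  fix j :: nat assume "1 \<le> j"
  then obtain j' where j': "1 \<le> j'" "shifted_part l j = shifted_part m j'"
    using assms(3) unfolding maya_def by (metis atLeast_iff image_iff)
  then have "j = j'"
    using card_maya_greater[OF assms(1) \<open>1 \<le> j\<close>] card_maya_greater[OF assms(2) j'(1)]
      assms(3) \<open>1 \<le> j\<close>
    by simp
  then show "part l j = part m j"
    using j' \<open>1 \<le> j\<close> by (simp add: shifted_part_def)
qed

lemma shifted_part_durfee_image:
  assumes "is_partition xs"
  shows "shifted_part xs ` {1..durfee xs} = maya xs \<inter> {0..}"
proof -
  have "0 \<le> shifted_part xs j \<longleftrightarrow> j \<le> durfee xs" if "1 \<le> j" for j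
    using le_durfee_iff[OF assms that] by (simp add: shifted_part_def)
  then show ?thesis unfolding maya_def by auto
qed

lemma not_in_maya_if_gap:
  assumes "is_partition xs" "1 \<le> J" "shifted_part xs (Suc J) < z" "z < shifted_part xs J"
  shows "z \<notin> maya xs"
proof
  assume "z \<in> maya xs"
  then obtain j where "1 \<le> j" "z = shifted_part xs j" unfolding maya_def by auto
  then show False
    using shifted_part_antimono[OF assms(1), of j J] shifted_part_antimono[OF assms(1), of "Suc J" j]
      assms(2-4) by (cases "j \<le> J") auto
qed

lemma gap_if_not_in_maya:
  assumes "z \<notin> maya xs" "z < shifted_part xs 1"
  obtains J where "1 \<le> J" "shifted_part xs (Suc J) < z" "z < shifted_part xs J"
proof -
  have "\<exists>k. shifted_part xs (Suc k) < z"
    using shifted_part_beyond_length[of xs "Suc (length xs + nat (- z))"]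
    by (intro exI[of _ "length xs + nat (- z)"]) simp
  define J where "J = (LEAST k. shifted_part xs (Suc k) < z)"
  have below: "shifted_part xs (Suc J) < z"
    unfolding J_def by (rule LeastI_ex) fact
  then have "1 \<le> J"
    using assms(2) by (cases J) auto
  then have "\<not> shifted_part xs (Suc (J - 1)) < z"
    unfolding J_def by (intro not_less_Least) auto
  moreover have "z \<noteq> shifted_part xs J"
    using assms(1) \<open>1 \<le> J\<close> unfolding maya_def by auto
  ultimately have "z < shifted_part xs J"
    using \<open>1 \<le> J\<close> by simp
  with \<open>1 \<le> J\<close> below show thesis by (rule that)
qed

lemma tpart_eq_iff_gap:
  assumes "is_partition xs" "1 \<le> i" "1 \<le> J"
  shows "tpart xs i = J \<longleftrightarrow>
    shifted_part xs (Suc J) < int i - int J - 1 \<and> int i - int J - 1 < shifted_part xs J"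
proof -
  have "tpart xs i = J \<longleftrightarrow> J \<le> tpart xs i \<and> \<not> Suc J \<le> tpart xs i"
    by auto
  also have "\<dots> \<longleftrightarrow> i \<le> part xs J \<and> \<not> i \<le> part xs (Suc J)"
    using le_tpart_iff[OF assms(1,2)] assms(3) by simp
  also have "\<dots> \<longleftrightarrow> shifted_part xs (Suc J) < int i - int J - 1 \<and> int i - int J - 1 < shifted_part xs J"
    by (auto simp: shifted_part_def)
  finally show ?thesis .
qed

lemma tpart_durfee_image:
  assumes "is_partition xs"
  shows "(\<lambda>i. int i - int (tpart xs i) - 1) ` {1..durfee xs} = {..<0} - maya xs"
proof (intro equalityI subsetI)
  fix z assume "z \<in> (\<lambda>i. int i - int (tpart xs i) - 1) ` {1..durfee xs}"
  then obtain i where i: "1 \<le> i" "i \<le> durfee xs" and z: "z = int i - int (tpart xs i) - 1"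
    by auto
  have "i \<le> tpart xs i"
    using le_tpart_iff[OF assms i(1) i(1)] le_durfee_iff[OF assms i(1)] i(2) by simp
  then have "1 \<le> tpart xs i" using i(1) by simp
  have "shifted_part xs (Suc (tpart xs i)) < z" "z < shifted_part xs (tpart xs i)"
    using tpart_eq_iff_gap[OF assms i(1) \<open>1 \<le> tpart xs i\<close>] z by simp_all
  then have "z \<notin> maya xs" by (rule not_in_maya_if_gap[OF assms \<open>1 \<le> tpart xs i\<close>])
  moreover have "z < 0" using \<open>i \<le> tpart xs i\<close> z by simp
  ultimately show "z \<in> {..<0} - maya xs" by simp
next
  fix z assume "z \<in> {..<0} - maya xs"
  then have z: "z < 0" "z \<notin> maya xs" by auto
  then have "z \<noteq> shifted_part xs 1" unfolding maya_def by auto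
  then have "z < shifted_part xs 1" using shifted_part_1_ge[of xs] z(1) by linarith
  then obtain J where J: "1 \<le> J" "shifted_part xs (Suc J) < z" "z < shifted_part xs J"
    using gap_if_not_in_maya z(2) by blast
  define i where "i = nat (z + int J + 1)"
  have i: "int i = z + int J + 1" "1 \<le> i"
    using J(2) by (auto simp: i_def shifted_part_def)
  have "tpart xs i = J"
    using tpart_eq_iff_gap[OF assms i(2) J(1)] J i(1) by simp
  moreover have "i \<le> durfee xs"
  proof -
    have "i \<le> J" "i \<le> part xs J" using i(1) z(1) J(3) by (auto simp: shifted_part_def)
    then show ?thesis using le_durfee_iff[OF assms i(2)] part_antimono[OF assms i(2)] by fastforce
  qed
  ultimately show "z \<in> (\<lambda>i. int i - int (tpart xs i) - 1) ` {1..durfee xs}"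
    using i by (intro image_eqI[of _ _ i]) auto
qed

lemma finite_frob: "finite (frob xs)"
  unfolding frob_def by (intro finite_UnI finite_image_set) simp_all

lemma frob_eq_image_maya:
  assumes "is_partition xs"
  shows "frob xs = half_int ` ((maya xs \<inter> {0..}) \<union> ({..<0} - maya xs))"
proof -
  have "frob xs = half_int ` shifted_part xs ` {1..durfee xs}
      \<union> half_int ` (\<lambda>i. int i - int (tpart xs i) - 1) ` {1..durfee xs}"
    unfolding frob_def half_int_def shifted_part_def image_image by (auto simp: algebra_simps)
  then show ?thesis
    unfolding shifted_part_durfee_image[OF assms] tpart_durfee_image[OF assms] image_Un .
qed

lemma symdiff_frob_eq_symdiff_Sset:
  assumes "is_partition l" "is_partition m"
  shows "symdiff (frob l) (frob m) = symdiff (Sset l) (Sset m)"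
proof -
  have "symdiff ((maya l \<inter> {0..}) \<union> ({..<0} - maya l)) ((maya m \<inter> {0..}) \<union> ({..<0} - maya m))
      = symdiff (maya l) (maya m)"
    unfolding symdiff_def by auto
  then show ?thesis
    unfolding frob_eq_image_maya[OF assms(1)] frob_eq_image_maya[OF assms(2)] Sset_eq_image_maya
      symdiff_image[OF inj_half_int] by simp
qed

lemma maya_eq_shifted_part_image_Un:
  assumes "length xs \<le> N"
  shows "maya xs = shifted_part xs ` {1..N} \<union> {..< - int N}"
proof (intro equalityI subsetI)
  fix z assume "z \<in> maya xs"
  then obtain j where "1 \<le> j" "z = shifted_part xs j" unfolding maya_def by auto
  then show "z \<in> shifted_part xs ` {1..N} \<union> {..< - int N}"
    using shifted_part_beyond_length[of xs j] assms by (cases "j \<le> N") auto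
next
  fix z assume z: "z \<in> shifted_part xs ` {1..N} \<union> {..< - int N}"
  have "z = shifted_part xs (nat (- z))" "1 \<le> nat (- z)" if "z < - int N"
    using that shifted_part_beyond_length[of xs "nat (- z)"] assms by auto
  then show "z \<in> maya xs"
    using z unfolding maya_def by (cases "z < - int N") auto
qed

lemma shifted_part_image_subset: "shifted_part xs ` {1..N} \<subseteq> {- int N..}"
  by (auto simp: shifted_part_def)

lemma card_shifted_part_image: "is_partition xs \<Longrightarrow> card (shifted_part xs ` {1..N}) = N"
  using inj_on_subset[OF inj_on_shifted_part] by (simp add: card_image subset_eq)

lemma sum_shifted_part_image:
  assumes "is_partition xs" "length xs \<le> N"
  shows "\<Sum>(shifted_part xs ` {1..N}) = int (psize xs) - (\<Sum>j=1..N. int j)"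
proof -
  have "\<Sum>(shifted_part xs ` {1..N}) = (\<Sum>j=1..N. shifted_part xs j)"
    using inj_on_subset[OF inj_on_shifted_part[OF assms(1)]] by (simp add: sum.reindex subset_eq)
  also have "\<dots> = (\<Sum>j=1..N. int (part xs j)) - (\<Sum>j=1..N. int j)"
    by (simp add: shifted_part_def sum_subtractf)
  also have "(\<Sum>j=1..N. int (part xs j)) = int (psize xs)"
    using sum_part_eq_psize[OF assms(2)] by (simp flip: of_nat_sum)
  finally show ?thesis .
qed

lemma maya_Diff_eq_shifted_part_image_Diff:
  assumes "length l \<le> N" "length m \<le> N"
  shows "maya l - maya m = shifted_part l ` {1..N} - shifted_part m ` {1..N}"
  using maya_eq_shifted_part_image_Un[OF assms(1)] maya_eq_shifted_part_image_Un[OF assms(2)]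
    shifted_part_image_subset[of l N]
  by fastforce

lemma finite_maya_Diff: "finite (maya l - maya m)"
  using maya_Diff_eq_shifted_part_image_Diff[of l "max (length l) (length m)" m] by simp

lemma card_maya_Diff_commute:
  assumes "is_partition l" "is_partition m"
  shows "card (maya l - maya m) = card (maya m - maya l)"
proof -
  define N where "N = max (length l) (length m)"
  let ?A = "shifted_part l ` {1..N}" and ?B = "shifted_part m ` {1..N}"
  have "card (?A - ?B) = N - card (?A \<inter> ?B)"
    using card_shifted_part_image[OF assms(1)] by (simp add: card_Diff_subset_Int)
  moreover have "card (?B - ?A) = N - card (?A \<inter> ?B)"
    using card_shifted_part_image[OF assms(2)] by (simp add: card_Diff_subset_Int Int_commute)
  moreover have "maya l - maya m = ?A - ?B" "maya m - maya l = ?B - ?A"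
    by (rule maya_Diff_eq_shifted_part_image_Diff; simp add: N_def)+
  ultimately show ?thesis by simp
qed

lemma Sset_Diff_eq_image: "Sset l - Sset m = half_int ` (maya l - maya m)"
  unfolding Sset_eq_image_maya using inj_half_int by (simp add: image_set_diff)

lemma finite_Sset_Diff: "finite (Sset l - Sset m)"
  unfolding Sset_Diff_eq_image using finite_maya_Diff by simp

lemma card_Sset_Diff: "card (Sset l - Sset m) = card (maya l - maya m)"
  unfolding Sset_Diff_eq_image using inj_half_int by (simp add: card_image inj_on_subset)

lemma hamming_commute: "hamming l m = hamming m l"
  unfolding hamming_def symdiff_def by (simp add: Un_commute Int_commute)

lemma hamming_eq_card_symdiff_Sset:
  "is_partition l \<Longrightarrow> is_partition m \<Longrightarrow> hamming l m = card (symdiff (Sset l) (Sset m)) / 2"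
  unfolding hamming_def by (simp add: symdiff_frob_eq_symdiff_Sset)

lemma hamming_eq_card_Sset_Diff:
  assumes "is_partition l" "is_partition m"
  shows "hamming l m = card (Sset l - Sset m)"
  using hamming_eq_card_symdiff_Sset[OF assms] card_symdiff[OF finite_Sset_Diff finite_Sset_Diff]
    card_maya_Diff_commute[OF assms]
  by (simp add: card_Sset_Diff)

lemma hamming_eq_0_iff:
  assumes "is_partition l" "is_partition m"
  shows "hamming l m = 0 \<longleftrightarrow> l = m"
proof
  assume "hamming l m = 0"
  then have "card (Sset l - Sset m) = 0" "card (Sset m - Sset l) = 0"
    using hamming_eq_card_Sset_Diff[OF assms] hamming_eq_card_Sset_Diff[OF assms(2,1)]
      hamming_commute[of l m] by simp_all
  then have "Sset l = Sset m"
    using finite_Sset_Diff[of l m] finite_Sset_Diff[of m l] by auto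
  then have "maya l = maya m"
    unfolding Sset_eq_image_maya by (simp add: inj_image_eq_iff[OF inj_half_int])
  then show "l = m" by (rule maya_inject[OF assms])
qed (simp add: hamming_def symdiff_def)

lemma hamming_triangle: "hamming l n \<le> hamming l m + hamming m n"
  unfolding hamming_def using card_symdiff_triangle[of "frob l" "frob m" "frob n"]
  by (simp add: finite_frob flip: of_nat_add)

lemma hamming_neq_1:
  assumes "is_partition l" "is_partition m" "psize l = psize m"
  shows "hamming l m \<noteq> 1"
proof
  assume "hamming l m = 1"
  define N where "N = max (length l) (length m)"
  let ?A = "shifted_part l ` {1..N}" and ?B = "shifted_part m ` {1..N}"
  have "card (maya l - maya m) = 1" "card (maya m - maya l) = 1"
    using \<open>hamming l m = 1\<close> hamming_commute[of l m]
      hamming_eq_card_Sset_Diff[OF assms(1,2)] hamming_eq_card_Sset_Diff[OF assms(2,1)]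
    by (simp_all add: card_Sset_Diff)
  moreover have "maya l - maya m = ?A - ?B" "maya m - maya l = ?B - ?A"
    by (rule maya_Diff_eq_shifted_part_image_Diff; simp add: N_def)+
  ultimately have "card (?A - ?B) = 1" "card (?B - ?A) = 1"
    by simp_all
  then obtain a b where "?A - ?B = {a}" "?B - ?A = {b}"
    by (meson card_1_singletonE)
  then have "\<Sum>?A \<noteq> \<Sum>?B"
    by (intro sum_neq_if_Diff_singletons) simp_all
  moreover have "\<Sum>?A = \<Sum>?B"
    using sum_shifted_part_image[OF assms(1), of N] sum_shifted_part_image[OF assms(2), of N] assms(3)
    by (simp add: N_def)
  ultimately show False by simp
qed

theorem lemma6:
  shows
  "(\<forall>l m n. is_partition l \<and> is_partition m \<and> is_partition n \<longrightarrow>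
       hamming l m \<in> \<int> \<and> hamming l m \<ge> 0 \<and>
       (hamming l m = 0 \<longleftrightarrow> l = m) \<and>
       hamming l m = hamming m l \<and>
       hamming l n \<le> hamming l m + hamming m n)
   \<and> (\<forall>l m. is_partition l \<and> is_partition m \<longrightarrow>
       finite (symdiff (Sset l) (Sset m)) \<and>
       hamming l m = real (card (symdiff (Sset l) (Sset m))) / 2)
   \<and> (\<forall>l m. is_partition l \<and> is_partition m \<and> psize l = psize m \<longrightarrow> hamming l m \<noteq> 1)
   \<and> (\<forall>l m (k::nat). is_partition l \<and> is_partition m \<and> hamming l m = 2 * real k \<longrightarrow>
       card (Sset l - Sset m) = 2 * k \<and> card (Sset m - Sset l) = 2 * k)"
proof (intro conjI allI impI; (elim conjE)?)
  fix l m n assume P: "is_partition l" "is_partition m" "is_partition n"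
  show "hamming l m \<in> \<int>" "hamming l m \<ge> 0"
    unfolding hamming_eq_card_Sset_Diff[OF P(1,2)] by simp_all
  show "hamming l m = 0 \<longleftrightarrow> l = m" by (rule hamming_eq_0_iff[OF P(1,2)])
  show "hamming l m = hamming m l" by (rule hamming_commute)
  show "hamming l n \<le> hamming l m + hamming m n" by (rule hamming_triangle)
next
  fix l m assume P: "is_partition l" "is_partition m"
  show "finite (symdiff (Sset l) (Sset m))"
    unfolding symdiff_eq_Diff_Un_Diff using finite_Sset_Diff by blast
  show "hamming l m = real (card (symdiff (Sset l) (Sset m))) / 2"
    by (rule hamming_eq_card_symdiff_Sset[OF P])
next
  fix l m assume "is_partition l" "is_partition m" "psize l = psize m"
  then show "hamming l m \<noteq> 1" by (rule hamming_neq_1)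
next
  fix l m and k :: nat assume P: "is_partition l" "is_partition m" and "hamming l m = 2 * real k"
  then show "card (Sset l - Sset m) = 2 * k" "card (Sset m - Sset l) = 2 * k"
    using hamming_eq_card_Sset_Diff[OF P] hamming_eq_card_Sset_Diff[OF P(2,1)]
      hamming_commute[of l m]
    by simp_all
qed

end
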